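(* Let $B>0$ and let $d\ge1$ be an integer. Let $(X_s,Y_s)_{s\ge1}$ be any sequence with $\|X_s\|_2\le1$ and $Y_s\in\mathbb R$; set $\ell_s(\theta)=\tfrac12(\langle\theta,X_s\rangle-Y_s)^2$ and $\mathcal L_s(Q)=-\log\int e^{-\ell_s(\theta)}\,\mathrm dQ(\theta)$. For each $j\in\{1,\dots,d\}$ run an independent exponentially weighted average (EWA) forecaster with prior the uniform distribution $U$ on $\mathcal B(B+1)$ only on the rounds $I_j=\{j,j+d,j+2d,\dots\}$: at round $s\in I_j$ it plays $\mathrm dQ_s(\theta)\propto\exp(-\sum_{r\in I_j,\,r<s}\ell_r(\theta))\,\mathrm dU(\theta)$. The joint forecaster plays at each round $s$ the distribution $Q_s$ of the forecaster $j$ with $s\in I_j$. Then for all $\bar\theta\in\mathcal B(B)$ and all $t\ge1$, $$\sum_{s=1}^t\mathcal L_s(Q_s)-\sum_{s=1}^t\ell_s(\bar\theta)\le\frac{dp}{2}\log\frac{(B+1)^2e\max(dp,t+d)}{dp}.$$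
   Context: $\langle\cdot,\cdot\rangle$ is the Euclidean inner product on $\mathbb R^p$ and $\mathcal B(r)$ the closed centred Euclidean ball of radius $r$ in $\mathbb R^p$. *)

theory Defs
  imports "HOL-Analysis.Analysis"
begin

definition sq_loss :: "(nat \<Rightarrow> 'a::euclidean_space) \<Rightarrow> (nat \<Rightarrow> real) \<Rightarrow> nat \<Rightarrow> 'a \<Rightarrow> real" where
  "sq_loss X Y s \<theta> = (\<theta> \<bullet> X s - Y s)\<^sup>2 / 2"

definition mix_loss :: "'a measure \<Rightarrow> ('a \<Rightarrow> real) \<Rightarrow> real" where
  "mix_loss Q f = - ln (\<integral>\<theta>. exp (- f \<theta>) \<partial>Q)"

definition unif_ball :: "real \<Rightarrow> 'a::euclidean_space measure" where
  "unif_ball R = uniform_measure lborel (cball 0 R)"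

definition ewa_post :: "'a measure \<Rightarrow> ('a \<Rightarrow> real) \<Rightarrow> 'a measure" where
  "ewa_post U F = density U (\<lambda>\<theta>. ennreal (exp (- F \<theta>) / (\<integral>\<eta>. exp (- F \<eta>) \<partial>U)))"

text \<open>Rounds of the sub-forecaster handling round s that precede s:
  rounds r \<ge> 1, r < s, in the same class I_j = {j, j+d, j+2d, ...}.\<close>
definition past_rounds :: "nat \<Rightarrow> nat \<Rightarrow> nat set" where
  "past_rounds d s = {r. 1 \<le> r \<and> r < s \<and> r mod d = s mod d}"

definition joint_forecast :: "nat \<Rightarrow> real \<Rightarrow> (nat \<Rightarrow> 'a::euclidean_space) \<Rightarrow> (nat \<Rightarrow> real) \<Rightarrow> nat \<Rightarrow> 'a measure" where
  "joint_forecast d B X Y s =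
     ewa_post (unif_ball (B + 1)) (\<lambda>\<theta>. \<Sum>r\<in>past_rounds d s. sq_loss X Y r \<theta>)"

end

(*
  Each of the d sub-forecasters is an exponentially weighted average forecaster, so its
  cumulative mixture loss telescopes to -ln Z, where Z is the integral of exp (- cumulative
  loss) against the uniform prior on the ball of radius B + 1.  Restricting this integral to
  the ball of radius e around \<theta>bar and applying Jensen's inequality to exp bounds -ln Z by
  p ln ((B + 1) / e) plus the average cumulative loss over that small ball.  The cross term of
  the expanded square averages to zero by symmetry of the ball, so this average exceeds the
  cumulative loss of \<theta>bar by at most e\<^sup>2/2 per round.  Summing over the d classes of
  rounds and taking e\<^sup>2 = dp / max(dp, t + d) gives the bound.
*)
theory Submission
  imports Defs
begin

lemma cball_borel [measurable]: "cball c r \<in> sets borel"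
  by (simp add: borel_closed)

lemma sets_unif_ball [measurable_cong]: "sets (unif_ball R) = sets borel"
  by (simp add: unif_ball_def)

lemma continuous_on_sq_loss [continuous_intros]:
  "continuous_on S f \<Longrightarrow> continuous_on S (\<lambda>x. sq_loss X Y r (f x))"
  unfolding sq_loss_def by (intro continuous_intros) auto

lemma borel_measurable_sq_loss [measurable]: "sq_loss X Y r \<in> borel_measurable borel"
  using continuous_on_sq_loss[OF continuous_on_id] by (rule borel_measurable_continuous_onI)

lemma lborel_integral_translate:
  fixes f :: "'a::euclidean_space \<Rightarrow> real"
  assumes [measurable]: "f \<in> borel_measurable borel"
  shows "(\<integral>x. f x \<partial>lborel) = (\<integral>x. f (c + x) \<partial>lborel)"
proof -
  have "(\<integral>x. f x \<partial>lborel) = (\<integral>x. f x \<partial>distr lborel borel ((+) c))"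
    by (simp add: lborel_distr_plus)
  then show ?thesis
    by (simp add: integral_distr)
qed

lemma lborel_integral_reflect:
  fixes f :: "'a::euclidean_space \<Rightarrow> real"
  assumes [measurable]: "f \<in> borel_measurable borel"
  shows "(\<integral>x. f x \<partial>lborel) = (\<integral>x. f (- x) \<partial>lborel)"
proof -
  have "distr lborel borel uminus = (lborel :: 'a measure)"
    using lborel_affine[of "-1::real" "0::'a"] by (simp add: density_1)
  then have "(\<integral>x. f x \<partial>lborel) = (\<integral>x. f x \<partial>distr lborel borel uminus)"
    by simp
  then show ?thesis
    by (simp add: integral_distr)
qed

lemma lborel_integral_cball_inner_eq_0:
  fixes v :: "'a::euclidean_space"
  shows "(\<integral>u. indicator (cball 0 e) u * (u \<bullet> v) \<partial>lborel) = 0"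
proof -
  have "(\<integral>u. indicator (cball 0 e) u * (u \<bullet> v) \<partial>lborel)
      = (\<integral>u. indicator (cball 0 e) (- u) * (- u \<bullet> v) \<partial>lborel)"
    by (rule lborel_integral_reflect) measurable
  also have "\<dots> = - (\<integral>u. indicator (cball 0 e) u * (u \<bullet> v) \<partial>lborel)"
    by (simp add: indicator_def)
  finally show ?thesis
    by simp
qed

lemma measure_lborel_cball:
  fixes c :: "'a::euclidean_space"
  assumes "r \<ge> 0"
  shows "measure lborel (cball c r) = r ^ DIM('a) * measure lborel (cball (0::'a) 1)"
  using content_ball_conv_unit_ball[OF assms, of c] by (simp add: content_cball_conv_ball)

lemma integral_unif_ball:
  fixes f :: "'a::euclidean_space \<Rightarrow> real"
  assumes "R > 0" and [measurable]: "f \<in> borel_measurable borel"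
  shows "(\<integral>x. f x \<partial>unif_ball R)
       = (\<integral>x. indicator (cball 0 R) x * f x \<partial>lborel) / measure lborel (cball (0::'a) R)"
proof -
  let ?m = "measure lborel (cball (0::'a) R)"
  have m_pos: "?m > 0"
    using content_cball_pos[OF assms(1)] .
  then have "1 / ennreal ?m = ennreal (1 / ?m)"
    using divide_ennreal[of 1 ?m] by simp
  moreover have "emeasure lborel (cball (0::'a) R) = ennreal ?m"
    using emeasure_lborel_cball_finite[of "0::'a" R] by (simp add: emeasure_eq_ennreal_measure)
  ultimately have "(unif_ball R :: 'a measure)
      = density lborel (\<lambda>x. ennreal (indicator (cball 0 R) x / ?m))"
    unfolding unif_ball_def uniform_measure_def
    by (intro density_cong) (auto simp: indicator_def)
  then have "(\<integral>x. f x \<partial>unif_ball R) = (\<integral>x. (indicator (cball 0 R) x / ?m) *\<^sub>R f x \<partial>lborel)"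
    using m_pos by (simp only:) (rule integral_density; simp)
  then show ?thesis
    by simp
qed

lemma lborel_integrable_indicator_mult:
  fixes f :: "'a::euclidean_space \<Rightarrow> real"
  assumes "compact S" "continuous_on S f"
  shows "integrable lborel (\<lambda>x. indicator S x * f x)"
  using borel_integrable_compact[OF assms] by simp

lemma lborel_integral_exp_neg_ge:
  fixes g :: "'a::euclidean_space \<Rightarrow> real"
  assumes "compact S" "continuous_on S g"
    and "(\<integral>x. indicator S x * g x \<partial>lborel) \<le> measure lborel S * K"
  shows "measure lborel S * exp (- K) \<le> (\<integral>x. indicator S x * exp (- g x) \<partial>lborel)"
proof -
  have tangent: "exp (- K) * (1 + K - g x) \<le> exp (- g x)" for x
  proof -
    have "exp (- K) * (1 + K - g x) \<le> exp (- K) * exp (K - g x)"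
      using exp_ge_add_one_self[of "K - g x"] by (intro mult_left_mono) (linarith, simp)
    then show ?thesis
      by (simp add: exp_diff exp_minus field_simps)
  qed
  have "integrable lborel (indicator S :: 'a \<Rightarrow> real)"
    using lborel_integrable_indicator_mult[OF \<open>compact S\<close> continuous_on_const, of 1] by simp
  note integrable_g = this lborel_integrable_indicator_mult[OF assms(1,2)]
  have "measure lborel S * exp (- K)
      \<le> exp (- K) * (1 + K) * measure lborel S - exp (- K) * (\<integral>x. indicator S x * g x \<partial>lborel)"
    using mult_left_mono[OF assms(3), of "exp (- K)"] by (simp add: algebra_simps)
  also have "\<dots> = (\<integral>x. exp (- K) * (1 + K) * indicator S x
                      - exp (- K) * (indicator S x * g x) \<partial>lborel)"
    using integrable_g \<open>compact S\<close> by (simp add: compact_imp_closed emeasure_compact_finite)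
  also have "\<dots> = (\<integral>x. indicator S x * (exp (- K) * (1 + K - g x)) \<partial>lborel)"
    by (rule Bochner_Integration.integral_cong) (simp_all add: algebra_simps)
  also have "\<dots> \<le> (\<integral>x. indicator S x * exp (- g x) \<partial>lborel)"
    using tangent
    by (intro integral_mono lborel_integrable_indicator_mult continuous_intros assms(1,2))
       (simp add: indicator_def)
  finally show ?thesis .
qed

lemma lborel_integral_cball_sq_loss_le:
  fixes c v :: "'a::euclidean_space"
  assumes "e \<ge> 0"
  shows "(\<integral>x. indicator (cball c e) x * ((x \<bullet> v - y)\<^sup>2 / 2) \<partial>lborel)
       \<le> measure lborel (cball c e) * ((c \<bullet> v - y)\<^sup>2 / 2 + (e * norm v)\<^sup>2 / 2)"
proof -
  define a where "a = c \<bullet> v - y"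
  let ?W = "cball (0::'a) e"
  have pointwise: "indicator ?W u * (((c + u) \<bullet> v - y)\<^sup>2 / 2)
      \<le> indicator ?W u * (a\<^sup>2 / 2 + (e * norm v)\<^sup>2 / 2) + a * (indicator ?W u * (u \<bullet> v))" for u
  proof (cases "u \<in> ?W")
    case True
    have "\<bar>u \<bullet> v\<bar> \<le> e * norm v"
      using Cauchy_Schwarz_ineq2[of u v] True by (simp add: mult_right_mono order_trans)
    then have "(u \<bullet> v)\<^sup>2 \<le> (e * norm v)\<^sup>2"
      using power_mono[of "\<bar>u \<bullet> v\<bar>" _ 2] by simp
    moreover have "((c + u) \<bullet> v - y)\<^sup>2 / 2 = a\<^sup>2 / 2 + a * (u \<bullet> v) + (u \<bullet> v)\<^sup>2 / 2"
      by (simp add: a_def inner_add_left power2_eq_square field_simps)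
    ultimately show ?thesis
      using True by simp
  qed simp
  have integrable: "integrable lborel (\<lambda>u. indicator ?W u * h u)"
    if "continuous_on ?W h" for h :: "'a \<Rightarrow> real"
    using lborel_integrable_indicator_mult[OF compact_cball that] .
  have "(\<integral>x. indicator (cball c e) x * ((x \<bullet> v - y)\<^sup>2 / 2) \<partial>lborel)
      = (\<integral>u. indicator ?W u * (((c + u) \<bullet> v - y)\<^sup>2 / 2) \<partial>lborel)"
    by (subst lborel_integral_translate[where c=c]) (simp_all add: indicator_def dist_norm)
  also have "\<dots> \<le> (\<integral>u. indicator ?W u * (a\<^sup>2 / 2 + (e * norm v)\<^sup>2 / 2)
                      + a * (indicator ?W u * (u \<bullet> v)) \<partial>lborel)"
    using pointwise
    by (intro integral_mono Bochner_Integration.integrable_add integrable_mult_right integrable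
        continuous_intros) auto
  also have "\<dots> = (\<integral>u. indicator ?W u * (a\<^sup>2 / 2 + (e * norm v)\<^sup>2 / 2) \<partial>lborel)
                 + a * (\<integral>u. indicator ?W u * (u \<bullet> v) \<partial>lborel)"
    using integrable[of "\<lambda>_. a\<^sup>2 / 2 + (e * norm v)\<^sup>2 / 2"] integrable[of "\<lambda>u. u \<bullet> v"]
    by (simp add: continuous_intros)
  also have "\<dots> = measure lborel ?W * (a\<^sup>2 / 2 + (e * norm v)\<^sup>2 / 2)"
    by (simp add: lborel_integral_cball_inner_eq_0 emeasure_lborel_cball_finite)
  also have "measure lborel ?W = measure lborel (cball c e)"
    using measure_lborel_cball[OF assms, of c] measure_lborel_cball[OF assms, of 0] by simp
  finally show ?thesis
    by (simp add: a_def)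
qed

lemma lborel_integral_cball_sum_sq_loss_le:
  fixes X :: "nat \<Rightarrow> 'a::euclidean_space" and e :: real
  assumes "e \<ge> 0" and "\<And>r. r \<in> A \<Longrightarrow> norm (X r) \<le> 1"
  shows "(\<integral>x. indicator (cball c e) x * (\<Sum>r\<in>A. sq_loss X Y r x) \<partial>lborel)
       \<le> measure lborel (cball c e) * ((\<Sum>r\<in>A. sq_loss X Y r c) + card A * e\<^sup>2 / 2)"
proof -
  have "(\<integral>x. indicator (cball c e) x * (\<Sum>r\<in>A. sq_loss X Y r x) \<partial>lborel)
      = (\<Sum>r\<in>A. \<integral>x. indicator (cball c e) x * sq_loss X Y r x \<partial>lborel)"
    unfolding sum_distrib_left
    by (intro Bochner_Integration.integral_sum lborel_integrable_indicator_mult compact_cball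
        continuous_intros)
  also have "\<dots> \<le> (\<Sum>r\<in>A. measure lborel (cball c e) * (sq_loss X Y r c + e\<^sup>2 / 2))"
  proof (rule sum_mono)
    fix r assume "r \<in> A"
    have "(e * norm (X r))\<^sup>2 \<le> e\<^sup>2 * 1"
      unfolding power_mult_distrib using assms \<open>r \<in> A\<close> by (intro mult_left_mono power_le_one) auto
    have "(\<integral>x. indicator (cball c e) x * sq_loss X Y r x \<partial>lborel)
        \<le> measure lborel (cball c e) * (sq_loss X Y r c + (e * norm (X r))\<^sup>2 / 2)"
      using lborel_integral_cball_sq_loss_le[OF assms(1)] by (simp add: sq_loss_def)
    also have "\<dots> \<le> measure lborel (cball c e) * (sq_loss X Y r c + e\<^sup>2 / 2)"
      using \<open>(e * norm (X r))\<^sup>2 \<le> e\<^sup>2 * 1\<close> by (intro mult_left_mono) auto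
    finally show "(\<integral>x. indicator (cball c e) x * sq_loss X Y r x \<partial>lborel)
        \<le> measure lborel (cball c e) * (sq_loss X Y r c + e\<^sup>2 / 2)" .
  qed
  also have "\<dots> = measure lborel (cball c e) * ((\<Sum>r\<in>A. sq_loss X Y r c) + card A * e\<^sup>2 / 2)"
    by (simp add: sum_distrib_left sum.distrib algebra_simps)
  finally show ?thesis .
qed

definition ewa_partition :: "real \<Rightarrow> (nat \<Rightarrow> 'a::euclidean_space) \<Rightarrow> (nat \<Rightarrow> real) \<Rightarrow> nat set \<Rightarrow> real"
  where "ewa_partition R X Y A = (\<integral>\<theta>. exp (- (\<Sum>r\<in>A. sq_loss X Y r \<theta>)) \<partial>unif_ball R)"

lemma ewa_partition_ge:
  fixes X :: "nat \<Rightarrow> 'a::euclidean_space" and e R :: real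
  assumes "\<And>r. r \<in> A \<Longrightarrow> norm (X r) \<le> 1" and "e > 0" and "norm \<theta> + e \<le> R"
  shows "(e / R) ^ DIM('a) * exp (- ((\<Sum>r\<in>A. sq_loss X Y r \<theta>) + card A * e\<^sup>2 / 2))
       \<le> ewa_partition R X Y A"
proof -
  define g where "g x = (\<Sum>r\<in>A. sq_loss X Y r x)" for x
  define K where "K = (\<Sum>r\<in>A. sq_loss X Y r \<theta>) + card A * e\<^sup>2 / 2"
  let ?m = "\<lambda>r. measure lborel (cball (0::'a) r)"
  have g_cont: "continuous_on S g" for S
    unfolding g_def by (intro continuous_intros)
  have "R > 0"
    using assms(2,3) norm_ge_zero[of \<theta>] by linarith
  have m_R: "?m R > 0"
    using content_cball_pos[OF \<open>R > 0\<close>] .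
  have "cball \<theta> e \<subseteq> cball 0 R"
  proof
    fix x assume "x \<in> cball \<theta> e"
    then show "x \<in> cball 0 R"
      using norm_triangle_sub[of x \<theta>] assms(3) by (simp add: dist_norm norm_minus_commute)
  qed
  have "(e / R) ^ DIM('a) * exp (- K) = measure lborel (cball \<theta> e) * exp (- K) / ?m R"
    using measure_lborel_cball[of e \<theta>] measure_lborel_cball[of R "0::'a"] assms(2) \<open>R > 0\<close>
      content_cball_pos[of 1 "0::'a"]
    by (simp add: power_divide field_simps)
  also have "\<dots> \<le> (\<integral>x. indicator (cball \<theta> e) x * exp (- g x) \<partial>lborel) / ?m R"
    using lborel_integral_cball_sum_sq_loss_le[of e A X \<theta> Y] assms(1,2) m_R
    by (intro divide_right_mono lborel_integral_exp_neg_ge compact_cball g_cont)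
       (auto simp: g_def K_def)
  also have "\<dots> \<le> (\<integral>x. indicator (cball 0 R) x * exp (- g x) \<partial>lborel) / ?m R"
    using \<open>cball \<theta> e \<subseteq> cball 0 R\<close> m_R
    by (intro divide_right_mono integral_mono lborel_integrable_indicator_mult compact_cball
        continuous_intros g_cont) (auto simp: indicator_def)
  also have "\<dots> = ewa_partition R X Y A"
    unfolding ewa_partition_def g_def using \<open>R > 0\<close> by (simp add: integral_unif_ball)
  finally show ?thesis
    by (simp add: K_def)
qed

lemma ewa_partition_pos:
  fixes X :: "nat \<Rightarrow> 'a::euclidean_space"
  assumes "\<And>r. r \<in> A \<Longrightarrow> norm (X r) \<le> 1" and "R > 0"
  shows "ewa_partition R X Y A > 0"
proof -
  have "0 < (R / R) ^ DIM('a) * exp (- ((\<Sum>r\<in>A. sq_loss X Y r 0) + card A * R\<^sup>2 / 2))"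
    using assms(2) by simp
  also have "\<dots> \<le> ewa_partition R X Y A"
    using assms by (intro ewa_partition_ge) auto
  finally show ?thesis .
qed

lemma ewa_partition_empty:
  fixes X :: "nat \<Rightarrow> 'a::euclidean_space"
  assumes "R > 0"
  shows "ewa_partition R X Y {} = 1"
  unfolding ewa_partition_def using assms content_cball_pos[OF assms, of "0::'a"]
  by (subst integral_unif_ball) (auto simp: emeasure_lborel_cball_finite)

lemma neg_ln_ewa_partition_le:
  fixes X :: "nat \<Rightarrow> 'a::euclidean_space" and e R :: real
  assumes "\<And>r. r \<in> A \<Longrightarrow> norm (X r) \<le> 1" and "e > 0" and "norm \<theta> + e \<le> R"
  shows "- ln (ewa_partition R X Y A)
       \<le> DIM('a) * ln (R / e) + (\<Sum>r\<in>A. sq_loss X Y r \<theta>) + card A * e\<^sup>2 / 2"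
proof -
  define K where "K = (\<Sum>r\<in>A. sq_loss X Y r \<theta>) + card A * e\<^sup>2 / 2"
  have "R > 0"
    using assms(2,3) norm_ge_zero[of \<theta>] by linarith
  have "DIM('a) * ln (e / R) - K = ln ((e / R) ^ DIM('a) * exp (- K))"
    using assms(2) \<open>R > 0\<close> by (simp add: ln_mult ln_realpow)
  also have "\<dots> \<le> ln (ewa_partition R X Y A)"
  proof (rule ln_mono)
    show "(e / R) ^ DIM('a) * exp (- K) \<le> ewa_partition R X Y A"
      unfolding K_def by (intro ewa_partition_ge assms)
    show "0 < (e / R) ^ DIM('a) * exp (- K)"
      using assms(2) \<open>R > 0\<close> by simp
  qed
  moreover have "DIM('a) * ln (e / R) = - (DIM('a) * ln (R / e))"
    using assms(2) \<open>R > 0\<close> by (simp add: ln_div algebra_simps)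
  ultimately show ?thesis
    unfolding K_def by linarith
qed

lemma mix_loss_ewa_post:
  fixes F f :: "'a \<Rightarrow> real"
  assumes [measurable]: "F \<in> borel_measurable U" "f \<in> borel_measurable U"
    and "(\<integral>\<theta>. exp (- F \<theta>) \<partial>U) > 0" and "(\<integral>\<theta>. exp (- (F \<theta> + f \<theta>)) \<partial>U) > 0"
  shows "mix_loss (ewa_post U F) f
       = ln (\<integral>\<theta>. exp (- F \<theta>) \<partial>U) - ln (\<integral>\<theta>. exp (- (F \<theta> + f \<theta>)) \<partial>U)"
proof -
  let ?Z = "\<integral>\<theta>. exp (- F \<theta>) \<partial>U"
  have "(\<integral>\<theta>. exp (- f \<theta>) \<partial>ewa_post U F) = (\<integral>\<theta>. (exp (- F \<theta>) / ?Z) *\<^sub>R exp (- f \<theta>) \<partial>U)"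
    unfolding ewa_post_def using assms(3) by (intro integral_density) auto
  also have "\<dots> = (\<integral>\<theta>. exp (- (F \<theta> + f \<theta>)) / ?Z \<partial>U)"
    by (intro Bochner_Integration.integral_cong) (simp_all add: mult_exp_exp)
  also have "\<dots> = (\<integral>\<theta>. exp (- (F \<theta> + f \<theta>)) \<partial>U) / ?Z"
    by simp
  finally show ?thesis
    unfolding mix_loss_def using assms(3,4) by (simp add: ln_div)
qed

definition class_rounds :: "nat \<Rightarrow> nat \<Rightarrow> nat \<Rightarrow> nat set"
  where "class_rounds d j t = {r. 1 \<le> r \<and> r \<le> t \<and> r mod d = j}"

lemma class_rounds_0 [simp]: "class_rounds d j 0 = {}"
  by (auto simp: class_rounds_def)

lemma class_rounds_Suc:
  "class_rounds d j (Suc t)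
     = (if j = Suc t mod d then insert (Suc t) (class_rounds d j t) else class_rounds d j t)"
  by (auto simp: class_rounds_def le_Suc_eq)

lemma past_rounds_Suc: "past_rounds d (Suc t) = class_rounds d (Suc t mod d) t"
  by (auto simp: past_rounds_def class_rounds_def)

lemma sum_class_rounds:
  assumes "d \<ge> 1"
  shows "(\<Sum>j<d. \<Sum>r\<in>class_rounds d j t. g r) = (\<Sum>r=1..t. g r)"
proof -
  have "(\<Sum>j<d. \<Sum>r\<in>class_rounds d j t. g r) = (\<Sum>j<d. \<Sum>r\<in>{r \<in> {1..t}. r mod d = j}. g r)"
    by (intro sum.cong) (auto simp: class_rounds_def)
  also have "\<dots> = (\<Sum>r=1..t. g r)"
    using assms by (intro sum.group) auto
  finally show ?thesis .
qed

lemma mix_loss_joint_forecast: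
  fixes X :: "nat \<Rightarrow> 'a::euclidean_space"
  assumes "B > 0" and "\<And>s. s \<ge> 1 \<Longrightarrow> norm (X s) \<le> 1" and "s \<ge> 1"
  shows "mix_loss (joint_forecast d B X Y s) (sq_loss X Y s)
       = ln (ewa_partition (B + 1) X Y (past_rounds d s))
         - ln (ewa_partition (B + 1) X Y (insert s (past_rounds d s)))"
proof -
  have "finite (past_rounds d s)" "s \<notin> past_rounds d s"
    by (auto simp: past_rounds_def intro: finite_subset[of _ "{..<s}"])
  then have "(\<Sum>r\<in>past_rounds d s. sq_loss X Y r \<theta>) + sq_loss X Y s \<theta>
      = (\<Sum>r\<in>insert s (past_rounds d s). sq_loss X Y r \<theta>)" for \<theta>
    by simp
  moreover have "ewa_partition (B + 1) X Y (past_rounds d s) > 0"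
    "ewa_partition (B + 1) X Y (insert s (past_rounds d s)) > 0"
    using assms by (auto intro!: ewa_partition_pos simp: past_rounds_def)
  ultimately show ?thesis
    unfolding joint_forecast_def ewa_partition_def by (subst mix_loss_ewa_post) auto
qed

lemma sum_mix_loss_joint_forecast:
  fixes X :: "nat \<Rightarrow> 'a::euclidean_space"
  assumes "B > 0" and "d \<ge> 1" and "\<And>s. s \<ge> 1 \<Longrightarrow> norm (X s) \<le> 1"
  shows "(\<Sum>s=1..t. mix_loss (joint_forecast d B X Y s) (sq_loss X Y s))
       = - (\<Sum>j<d. ln (ewa_partition (B + 1) X Y (class_rounds d j t)))"
proof (induction t)
  case 0
  show ?case
    using assms(1) by (simp add: ewa_partition_empty)
next
  case (Suc t)
  let ?k = "Suc t mod d"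
  let ?lnZ = "\<lambda>t j. ln (ewa_partition (B + 1) X Y (class_rounds d j t))"
  have "(\<Sum>j<d. ?lnZ (Suc t) j) - (\<Sum>j<d. ?lnZ t j)
      = (\<Sum>j<d. if j = ?k then ?lnZ (Suc t) ?k - ?lnZ t ?k else 0)"
    unfolding sum_subtractf[symmetric] by (intro sum.cong) (auto simp: class_rounds_Suc)
  also have "\<dots> = ?lnZ (Suc t) ?k - ?lnZ t ?k"
    using assms(2) by simp
  also have "\<dots> = - mix_loss (joint_forecast d B X Y (Suc t)) (sq_loss X Y (Suc t))"
    using mix_loss_joint_forecast[OF assms(1,3), where s="Suc t" and d=d and Y=Y]
    by (simp add: past_rounds_Suc class_rounds_Suc)
  finally show ?case
    using Suc.IH by simp
qed

lemma regret_at_tuned_radius_le: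
  fixes N M R t :: real
  assumes "0 < N" and "N \<le> M" and "t \<le> M" and "R > 0"
  shows "N * ln (R / sqrt (N / M)) + t * (N / M) / 2 \<le> N / 2 * ln (R\<^sup>2 * exp 1 * M / N)"
proof -
  have "M > 0"
    using assms(1,2) by linarith
  have ln_radius: "ln (R / sqrt (N / M)) = ln R - (ln N - ln M) / 2"
    using assms(1,4) \<open>M > 0\<close> by (simp add: ln_div ln_sqrt)
  have ln_bound: "ln (R\<^sup>2 * exp 1 * M / N) = 2 * ln R + 1 + ln M - ln N"
    using assms(1,4) \<open>M > 0\<close> by (simp add: ln_div ln_mult ln_realpow)
  have "t * (N / M) \<le> N"
    using assms(1,3) \<open>M > 0\<close> by (simp add: field_simps)
  then have "N * ln (R / sqrt (N / M)) + t * (N / M) / 2 \<le> N * ln (R / sqrt (N / M)) + N / 2"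
    by simp
  also have "\<dots> = N / 2 * ln (R\<^sup>2 * exp 1 * M / N)"
    unfolding ln_radius ln_bound by (simp add: field_simps)
  finally show ?thesis .
qed

lemma regret_joint_forecast_le:
  fixes X :: "nat \<Rightarrow> 'a::euclidean_space" and e :: real
  assumes "B > 0" and "d \<ge> 1" and "\<And>s. s \<ge> 1 \<Longrightarrow> norm (X s) \<le> 1"
    and "e > 0" and "norm \<theta> + e \<le> B + 1"
  shows "(\<Sum>s=1..t. mix_loss (joint_forecast d B X Y s) (sq_loss X Y s))
           - (\<Sum>s=1..t. sq_loss X Y s \<theta>)
         \<le> real (d * DIM('a)) * ln ((B + 1) / e) + t * e\<^sup>2 / 2"
proof -
  let ?C = "\<lambda>j. class_rounds d j t"
  have sum_losses: "(\<Sum>j<d. \<Sum>r\<in>?C j. sq_loss X Y r \<theta>) = (\<Sum>s=1..t. sq_loss X Y s \<theta>)"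
    by (rule sum_class_rounds[OF assms(2)])
  have sum_cards: "(\<Sum>j<d. real (card (?C j))) = real t"
    using sum_class_rounds[OF assms(2), of "\<lambda>_. 1::real" t] by simp
  have "(\<Sum>s=1..t. mix_loss (joint_forecast d B X Y s) (sq_loss X Y s))
      = - (\<Sum>j<d. ln (ewa_partition (B + 1) X Y (?C j)))"
    by (rule sum_mix_loss_joint_forecast[OF assms(1-3)])
  also have "\<dots> \<le> (\<Sum>j<d. DIM('a) * ln ((B + 1) / e) + (\<Sum>r\<in>?C j. sq_loss X Y r \<theta>)
                          + card (?C j) * e\<^sup>2 / 2)"
    unfolding sum_negf[symmetric] using assms(3-5)
    by (intro sum_mono neg_ln_ewa_partition_le) (auto simp: class_rounds_def)
  also have "\<dots> = real (d * DIM('a)) * ln ((B + 1) / e) + (\<Sum>s=1..t. sq_loss X Y s \<theta>)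
                 + t * e\<^sup>2 / 2"
    by (simp add: sum.distrib sum_losses sum_cards flip: sum_distrib_right sum_divide_distrib)
  finally show ?thesis
    by linarith
qed

theorem lemma2:
  fixes B :: real and d t :: nat
    and X :: "nat \<Rightarrow> 'a::euclidean_space" and Y :: "nat \<Rightarrow> real"
    and \<theta>bar :: 'a
  assumes "B > 0" and "d \<ge> 1"
    and "\<And>s. s \<ge> 1 \<Longrightarrow> norm (X s) \<le> 1"
    and "\<theta>bar \<in> cball 0 B"
    and "t \<ge> 1"
  shows "(\<Sum>s=1..t. mix_loss (joint_forecast d B X Y s) (sq_loss X Y s))
           - (\<Sum>s=1..t. sq_loss X Y s \<theta>bar)
         \<le> real (d * DIM('a)) / 2 *
            ln ((B + 1)\<^sup>2 * exp 1 * real (max (d * DIM('a)) (t + d)) / real (d * DIM('a)))"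
proof -
  define N where "N = real (d * DIM('a))"
  define M where "M = real (max (d * DIM('a)) (t + d))"
  have "0 < N" "real t \<le> M"
    using assms(2) by (auto simp: N_def M_def)
  moreover have "N \<le> M"
    unfolding N_def M_def of_nat_le_iff by simp
  ultimately have "0 < sqrt (N / M)" "sqrt (N / M) \<le> 1"
    by auto
  moreover have "norm \<theta>bar \<le> B"
    using assms(4) by simp
  ultimately have "(\<Sum>s=1..t. mix_loss (joint_forecast d B X Y s) (sq_loss X Y s))
      - (\<Sum>s=1..t. sq_loss X Y s \<theta>bar)
      \<le> N * ln ((B + 1) / sqrt (N / M)) + t * (sqrt (N / M))\<^sup>2 / 2"
    unfolding N_def by (intro regret_joint_forecast_le assms(1-3)) linarith+
  also have "\<dots> = N * ln ((B + 1) / sqrt (N / M)) + t * (N / M) / 2"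
    using \<open>0 < N\<close> \<open>N \<le> M\<close> by simp
  also have "\<dots> \<le> N / 2 * ln ((B + 1)\<^sup>2 * exp 1 * M / N)"
    using \<open>0 < N\<close> \<open>N \<le> M\<close> \<open>real t \<le> M\<close> assms(1) by (intro regret_at_tuned_radius_le) auto
  finally show ?thesis
    by (simp only: N_def M_def)
qed

end
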